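(* Let $q$ be a prime power, $r\ge 1$ an integer, and $\mathcal{S}$ a $q^r$-divisible spanning set of $q^{r+1}$ points in $\mathrm{PG}(v-1,q)$. Then the number of hyperplanes $H$ with $\mathcal{S}\cap H=\emptyset$ is at most $\left(q^{v-r-1}-q+2\right)/2$.
   Context: $\mathrm{PG}(v-1,q)$ is the projective space of $\mathbb{F}_q^v$; points are $1$-dimensional and hyperplanes $(v-1)$-dimensional subspaces of $\mathbb{F}_q^v$. A set $\mathcal{S}$ of points is spanning if its points span $\mathbb{F}_q^v$, and it is $q^r$-divisible if $|\mathcal{S}\cap H|\equiv|\mathcal{S}|\pmod{q^r}$ for every hyperplane $H$. *)

theory Defs
  imports "HOL-Analysis.Analysis"
begin

text \<open>Projective geometry PG(v-1,q) realised in the vector space 'a^'n over the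
finite field 'a (q = CARD('a), v = CARD('n)).\<close>

definition pg_point :: "('a::field ^ 'n) set \<Rightarrow> bool" where
  "pg_point P \<longleftrightarrow> vec.subspace P \<and> vec.dim P = 1"

definition pg_hyperplane :: "('a::field ^ 'n) set \<Rightarrow> bool" where
  "pg_hyperplane H \<longleftrightarrow> vec.subspace H \<and> vec.dim H = CARD('n) - 1"

definition pg_spanning :: "('a::field ^ 'n) set set \<Rightarrow> bool" where
  "pg_spanning S \<longleftrightarrow> vec.span (\<Union> S) = UNIV"

definition pg_divisible :: "nat \<Rightarrow> ('a::field ^ 'n) set set \<Rightarrow> bool" where
  "pg_divisible m S \<longleftrightarrow>
     (\<forall>H. pg_hyperplane H \<longrightarrow> card {P \<in> S. P \<subseteq> H} mod m = card S mod m)"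

end

theory Submission
  imports Defs
begin

(* A hyperplane is the kernel of exactly q - 1 nonzero linear functionals f. Let m(f) be the number
   of points of S in the kernel of f. Double counting incidences over all q^v functionals gives
   sum m = |S| q^(v-1) and sum m^2 = |S| (|S| + q - 1) q^(v-2). For f \<noteq> 0 divisibility makes
   m(f) a multiple of t = q^r, so (m(f) - t)(m(f) - 2t) \<ge> 0, with value 2t^2 when the kernel of f
   misses S. Summing over f \<noteq> 0 with |S| = qt bounds the number of such f, hence of the hyperplanes
   missing S. *)

definition dotp :: "'a::field^'n \<Rightarrow> 'a^'n \<Rightarrow> 'a" where
  "dotp f x = (\<Sum>i\<in>UNIV. f$i * x$i)"

definition kerf :: "'a::field^'n \<Rightarrow> ('a^'n) set" where
  "kerf f = {x. dotp f x = 0}"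

lemma dotp_commute: "dotp f x = dotp x f"
  by (simp add: dotp_def mult.commute)

lemma dotp_add_right [simp]: "dotp f (x + y) = dotp f x + dotp f y"
  by (simp add: dotp_def distrib_left sum.distrib)

lemma dotp_diff_right [simp]: "dotp f (x - y) = dotp f x - dotp f y"
  by (simp add: dotp_def right_diff_distrib sum_subtractf)

lemma dotp_scale_right [simp]: "dotp f (c *s x) = c * dotp f x"
  by (simp add: dotp_def sum_distrib_left algebra_simps)

lemma dotp_diff_left [simp]: "dotp (f - g) x = dotp f x - dotp g x"
  by (simp add: dotp_def left_diff_distrib sum_subtractf)

lemma dotp_scale_left [simp]: "dotp (c *s f) x = c * dotp f x"
  by (simp add: dotp_def sum_distrib_left algebra_simps)

lemma dotp_zero [simp]: "dotp f 0 = 0" "dotp 0 x = 0"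
  by (simp_all add: dotp_def)

lemma dotp_axis_right [simp]: "dotp f (axis i 1) = f$i"
  by (simp add: dotp_def axis_def if_distrib cong: if_cong)

lemma dotp_eq_1_exists:
  fixes f :: "'a::field^'n"
  assumes "f \<noteq> 0"
  obtains w where "dotp f w = 1"
proof -
  obtain i where "f$i \<noteq> 0"
    using assms by (metis vec_eq_iff zero_index)
  then have "dotp f ((1 / f$i) *s axis i 1) = 1" by simp
  then show thesis by (rule that)
qed

lemma subspace_kerf: "vec.subspace (kerf f)"
  unfolding vec.subspace_def kerf_def by simp

lemma diff_scale_in_kerf: "dotp f w = 1 \<Longrightarrow> x - dotp f x *s w \<in> kerf f"
  by (simp add: kerf_def)

lemma kerf_scale: "c \<noteq> 0 \<Longrightarrow> kerf (c *s f) = kerf f"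
  by (auto simp: kerf_def)

lemma span_singleton_subset_kerf_iff: "vec.span {p} \<subseteq> kerf f \<longleftrightarrow> dotp f p = 0"
  using vec.span_minimal[OF _ subspace_kerf, of "{p}" f] vec.span_base[of p "{p}"]
  by (auto simp: kerf_def)

lemma kerf_subset_imp_scale:
  fixes f g :: "'a::field^'n"
  assumes "f \<noteq> 0" and "kerf f \<subseteq> kerf g"
  obtains c where "g = c *s f"
proof -
  obtain w where w: "dotp f w = 1" using dotp_eq_1_exists[OF assms(1)] .
  have "dotp g x = dotp f x * dotp g w" for x
    using subsetD[OF assms(2) diff_scale_in_kerf[OF w, of x]] by (simp add: kerf_def)
  then have "g $ j = (dotp g w *s f) $ j" for j
    by (metis dotp_axis_right mult.commute vector_smult_component)
  then show thesis using that vec_eq_iff by blast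
qed

lemma pg_point_obtain_span:
  assumes "pg_point P"
  obtains p where "p \<noteq> 0" and "P = vec.span {p}"
proof -
  have sP: "vec.subspace P" and dP: "vec.dim P = 1" using assms by (auto simp: pg_point_def)
  obtain B where B: "B \<subseteq> P" "vec.independent B" "P \<subseteq> vec.span B" "card B = vec.dim P"
    by (rule vec.basis_exists)
  from B(4) dP have "card B = 1" by simp
  then obtain p where p: "B = {p}" by (rule card_1_singletonE)
  have "p \<noteq> 0" using B(2) vec.dependent_zero unfolding p by blast
  moreover have "P = vec.span {p}"
    using B(1,3) vec.span_minimal[OF _ sP] unfolding p by blast
  ultimately show thesis by (rule that)
qed

lemma pg_hyperplane_kerf:
  fixes f :: "'a::field^'n"
  assumes "f \<noteq> 0"
  shows "pg_hyperplane (kerf f)"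
proof -
  obtain w where w: "dotp f w = 1" using dotp_eq_1_exists[OF assms] .
  obtain B where B: "B \<subseteq> kerf f" "vec.independent B" "kerf f \<subseteq> vec.span B"
      "card B = vec.dim (kerf f)"
    by (rule vec.basis_exists)
  have "vec.span B \<subseteq> kerf f" using B(1) subspace_kerf vec.span_minimal by blast
  then have w_notin: "w \<notin> vec.span B" using w by (auto simp: kerf_def)
  have span_all: "x \<in> vec.span (insert w B)" for x
  proof -
    have "x - dotp f x *s w \<in> vec.span (insert w B)"
      using B(3) diff_scale_in_kerf[OF w] vec.span_mono[of B "insert w B"] by blast
    moreover have "dotp f x *s w \<in> vec.span (insert w B)"
      by (simp add: vec.span_base vec.span_scale)
    ultimately have "(x - dotp f x *s w) + dotp f x *s w \<in> vec.span (insert w B)"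
      by (rule vec.span_add)
    then show ?thesis by simp
  qed
  have "card (insert w B) = vec.dim (UNIV :: ('a^'n) set)"
    by (rule vec.basis_card_eq_dim) (use span_all vec.independent_insertI[OF w_notin B(2)] in auto)
  moreover have "w \<notin> B" using w_notin vec.span_base by blast
  ultimately have "card B + 1 = CARD('n)"
    using vec.finiteI_independent[OF B(2)] by (simp add: vec.dim_UNIV card_cart_basis)
  then show ?thesis using B(4) subspace_kerf[of f] by (simp add: pg_hyperplane_def)
qed

lemma nonzero_annihilator_exists:
  fixes B :: "('a::field^'n) set"
  assumes "finite B" and "card B < CARD('n)"
  obtains h where "h \<noteq> 0" and "\<And>b. b \<in> B \<Longrightarrow> dotp h b = 0"
proof -
  obtain g :: "'a^'n \<Rightarrow> 'n" where g: "inj_on g B"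
    using card_le_inj[OF assms(1), of "UNIV :: 'n set"] assms(2) by auto
  have "card (g ` B) < CARD('n)" using assms(2) card_image[OF g] by simp
  then have "g ` B \<noteq> UNIV" by auto
  then obtain i0 where i0: "i0 \<notin> g ` B" by blast
  (* The rows of M are the vectors of B and a zero row i0, so M *v _ is not surjective. *)
  define M :: "'a^'n^'n" where "M = (\<chi> i. if i \<in> g ` B then the_inv_into B g i else 0)"
  have M: "(M *v h) $ i = dotp (M $ i) h" for h i
    by (simp add: matrix_vector_mult_def dotp_def)
  have "M $ i0 = 0" using i0 by (simp add: M_def)
  then have "(M *v h) $ i0 = 0" for h by (simp add: M)
  then have "axis i0 1 \<notin> range ((*v) M)"
    by (metis axis_nth one_neq_zero rangeE)
  then have "\<not> surj ((*v) M)" by auto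
  then have "\<not> inj ((*v) M)" using vec.linear_inj_imp_surj[OF vec.linear_axioms] by blast
  then obtain h1 h2 where "h1 \<noteq> h2" "M *v h1 = M *v h2" unfolding inj_def by blast
  moreover have "dotp (h1 - h2) b = 0" if "M *v h1 = M *v h2" "b \<in> B" for b
  proof -
    have "M $ g b = b" using \<open>b \<in> B\<close> g by (simp add: M_def the_inv_into_f_f)
    then show ?thesis
      using arg_cong[OF that(1), of "\<lambda>v. v $ g b"] by (simp add: M dotp_commute)
  qed
  ultimately show thesis using that[of "h1 - h2"] by simp
qed

lemma pg_hyperplane_obtain_kerf:
  fixes H :: "('a::field^'n) set"
  assumes "pg_hyperplane H"
  obtains h where "h \<noteq> 0" and "H = kerf h"
proof -
  have sH: "vec.subspace H" and dH: "vec.dim H = CARD('n) - 1"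
    using assms by (auto simp: pg_hyperplane_def)
  obtain B where B: "B \<subseteq> H" "vec.independent B" "H \<subseteq> vec.span B" "card B = vec.dim H"
    by (rule vec.basis_exists)
  have "finite B" using B(2) by (rule vec.finiteI_independent)
  moreover have "card B < CARD('n)" using B(4) dH by simp
  ultimately obtain h where h: "h \<noteq> 0" "\<And>b. b \<in> B \<Longrightarrow> dotp h b = 0"
    by (rule nonzero_annihilator_exists) auto
  have "B \<subseteq> kerf h" using h(2) by (auto simp: kerf_def)
  then have "vec.span B \<subseteq> kerf h" by (rule vec.span_minimal[OF _ subspace_kerf])
  then have "H \<subseteq> kerf h" using B(3) by blast
  moreover have "vec.dim (kerf h) = vec.dim H"
    using pg_hyperplane_kerf[OF h(1)] dH by (simp add: pg_hyperplane_def)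
  ultimately have "H = kerf h" using vec.subspace_dim_equal[OF sH subspace_kerf] by simp
  with h(1) show thesis by (rule that)
qed

lemma card_Int_kerf_mult:
  fixes X :: "('a::{finite,field}^'n) set"
  assumes u: "dotp p u = 1" and X: "\<And>x c. x \<in> X \<Longrightarrow> x + c *s u \<in> X"
  shows "card (X \<inter> kerf p) * CARD('a) = card X"
proof -
  have X_diff: "x - c *s u \<in> X" if "x \<in> X" for x c
    using X[OF that, of "- c"] by (simp add: vec_eq_iff)
  have "bij_betw (\<lambda>(x, c). x + c *s u) ((X \<inter> kerf p) \<times> UNIV) X"
  proof (rule bij_betw_byWitness[where f'="\<lambda>y. (y - dotp p y *s u, dotp p y)"])
    show "(\<lambda>y. (y - dotp p y *s u, dotp p y)) ` X \<subseteq> (X \<inter> kerf p) \<times> UNIV"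
      using X_diff diff_scale_in_kerf[OF u] by auto
  qed (use u X in \<open>auto simp: kerf_def\<close>)
  then have "card ((X \<inter> kerf p) \<times> (UNIV :: 'a set)) = card X" by (rule bij_betw_same_card)
  then show ?thesis by (simp add: card_cartesian_product)
qed

lemma card_field_ge_2: "CARD('a::{finite,field}) \<ge> 2"
proof -
  have "card {0::'a, 1} \<le> CARD('a)" by (rule card_mono) auto
  then show ?thesis by simp
qed

lemma card_kerf_mult:
  fixes p :: "'a::{finite,field}^'n"
  assumes "p \<noteq> 0"
  shows "card (kerf p) * CARD('a) = CARD('a) ^ CARD('n)"
proof -
  obtain u where "dotp p u = 1" using dotp_eq_1_exists[OF assms] .
  then have "card (UNIV \<inter> kerf p) * CARD('a) = card (UNIV :: ('a^'n) set)"
    by (rule card_Int_kerf_mult) simp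
  then show ?thesis by simp
qed

lemma annihilator_span_singleton: "{f. vec.span {p} \<subseteq> kerf f} = kerf p"
  unfolding span_singleton_subset_kerf_iff by (simp add: kerf_def dotp_commute)

lemma card_annihilator_point:
  fixes P :: "('a::{finite,field}^'n) set"
  assumes "pg_point P"
  shows "card {f. P \<subseteq> kerf f} * CARD('a) = CARD('a) ^ CARD('n)"
proof -
  obtain p where "p \<noteq> 0" "P = vec.span {p}" using pg_point_obtain_span[OF assms] .
  then show ?thesis using card_kerf_mult annihilator_span_singleton by metis
qed

lemma card_annihilator_two_points:
  fixes P P' :: "('a::{finite,field}^'n) set"
  assumes "pg_point P" and "pg_point P'" and "P \<noteq> P'"
  shows "card {f. P \<subseteq> kerf f \<and> P' \<subseteq> kerf f} * CARD('a)^2 = CARD('a) ^ CARD('n)"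
proof -
  obtain p where p: "p \<noteq> 0" "P = vec.span {p}" using pg_point_obtain_span[OF assms(1)] .
  obtain p' where p': "P' = vec.span {p'}" using pg_point_obtain_span[OF assms(2)] .
  have "\<not> kerf p \<subseteq> kerf p'"
  proof
    assume "kerf p \<subseteq> kerf p'"
    then obtain c where "p' = c *s p" using kerf_subset_imp_scale[OF p(1)] by blast
    then have "P' \<subseteq> P"
      using p p' vec.span_minimal[of "{p'}" "vec.span {p}"] by (simp add: vec.span_base vec.span_scale)
    then have "P' = P"
      using assms(1,2) vec.subspace_dim_equal[of P' P] by (simp add: pg_point_def)
    with assms(3) show False by simp
  qed
  then obtain y where y: "dotp p y = 0" "dotp p' y \<noteq> 0" by (auto simp: kerf_def)
  define u where "u = (1 / dotp p' y) *s y"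
  have "dotp p' u = 1" "dotp p u = 0" using y by (simp_all add: u_def)
  then have "card (kerf p \<inter> kerf p') * CARD('a) = card (kerf p)"
    by (intro card_Int_kerf_mult) (auto simp: kerf_def)
  moreover have "{f. P \<subseteq> kerf f \<and> P' \<subseteq> kerf f} = kerf p \<inter> kerf p'"
    using p(2) p' annihilator_span_singleton by blast
  ultimately show ?thesis
    using card_kerf_mult[OF p(1)] by (metis mult.assoc power2_eq_square)
qed

definition points_on :: "('a::field^'n) set set \<Rightarrow> 'a^'n \<Rightarrow> nat" where
  "points_on S f = card {P\<in>S. P \<subseteq> kerf f}"

lemma points_on_zero: "points_on S 0 = card S"
  by (simp add: points_on_def kerf_def)

lemma sum_points_on:
  fixes S :: "('a::{finite,field}^'n) set set"
  assumes "\<forall>P\<in>S. pg_point P"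
  shows "(\<Sum>f\<in>UNIV. points_on S f) * CARD('a) = card S * CARD('a) ^ CARD('n)"
proof -
  have "(\<Sum>f\<in>UNIV. points_on S f) = (\<Sum>P\<in>S. card {f. P \<subseteq> kerf f})"
    unfolding points_on_def by (rule sum_multicount_gen) auto
  then have "(\<Sum>f\<in>UNIV. points_on S f) * CARD('a) = (\<Sum>P\<in>S. card {f. P \<subseteq> kerf f} * CARD('a))"
    by (simp add: sum_distrib_right)
  also have "\<dots> = (\<Sum>P\<in>S. CARD('a) ^ CARD('n))"
    using assms card_annihilator_point by (intro sum.cong) auto
  finally show ?thesis by simp
qed

lemma sum_points_on_squared:
  fixes S :: "('a::{finite,field}^'n) set set"
  assumes "\<forall>P\<in>S. pg_point P"
  shows "(\<Sum>f\<in>UNIV. points_on S f ^ 2) * CARD('a)^2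
           = card S * (card S + CARD('a) - 1) * CARD('a) ^ CARD('n)"
proof -
  let ?q = "CARD('a)" and ?Q = "CARD('a) ^ CARD('n)"
  have "points_on S f ^ 2 = card {x\<in>S \<times> S. fst x \<subseteq> kerf f \<and> snd x \<subseteq> kerf f}" for f
  proof -
    have "{x\<in>S \<times> S. fst x \<subseteq> kerf f \<and> snd x \<subseteq> kerf f}
          = {P\<in>S. P \<subseteq> kerf f} \<times> {P\<in>S. P \<subseteq> kerf f}" by auto
    then show ?thesis by (simp add: points_on_def power2_eq_square card_cartesian_product)
  qed
  then have "(\<Sum>f\<in>UNIV. points_on S f ^ 2)
             = (\<Sum>x\<in>S \<times> S. card {f. fst x \<subseteq> kerf f \<and> snd x \<subseteq> kerf f})"
    by (simp only:) (rule sum_multicount_gen, auto)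
  also have "\<dots> = (\<Sum>P\<in>S. \<Sum>P'\<in>S. card {f. P \<subseteq> kerf f \<and> P' \<subseteq> kerf f})"
    by (simp add: sum.cartesian_product split_def)
  finally have "(\<Sum>f\<in>UNIV. points_on S f ^ 2) * ?q^2
      = (\<Sum>P\<in>S. \<Sum>P'\<in>S. card {f. P \<subseteq> kerf f \<and> P' \<subseteq> kerf f} * ?q^2)"
    by (simp add: sum_distrib_right)
  also have "\<dots> = (\<Sum>P\<in>S. ?q * ?Q + (card S - 1) * ?Q)"
  proof (rule sum.cong[OF refl])
    fix P assume P: "P \<in> S"
    have "(\<Sum>P'\<in>S. card {f. P \<subseteq> kerf f \<and> P' \<subseteq> kerf f} * ?q^2)
          = card {f. P \<subseteq> kerf f} * ?q^2 + (\<Sum>P'\<in>S - {P}. card {f. P \<subseteq> kerf f \<and> P' \<subseteq> kerf f} * ?q^2)"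
      using P by (simp add: sum.remove)
    also have "\<dots> = ?q * ?Q + (\<Sum>P'\<in>S - {P}. ?Q)"
      using P assms card_annihilator_point[of P] card_annihilator_two_points[of P]
      by (intro arg_cong2[where f="(+)"] sum.cong) (auto simp: power2_eq_square mult.assoc)
    finally show "(\<Sum>P'\<in>S. card {f. P \<subseteq> kerf f \<and> P' \<subseteq> kerf f} * ?q^2) = ?q * ?Q + (card S - 1) * ?Q"
      using P by simp
  qed
  also have "\<dots> = card S * (card S + ?q - 1) * ?Q"
    by (cases "card S") (simp_all add: algebra_simps)
  finally show ?thesis .
qed

lemma sum_quadratic_points_on:
  fixes S :: "('a::{finite,field}^'n) set set" and t :: real
  assumes "\<forall>P\<in>S. pg_point P" and "real (card S) = CARD('a) * t"
  shows "(\<Sum>f\<in>UNIV. (real (points_on S f) - t) * (real (points_on S f) - 2 * t)) * CARD('a)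
           = t * (real CARD('a) - 1) * real CARD('a) ^ CARD('n)"
proof -
  define q :: real where "q = CARD('a)"
  define Q :: real where "Q = q ^ CARD('n)"
  let ?m = "\<lambda>f. real (points_on S f)"
  define M1 where "M1 = (\<Sum>f\<in>UNIV. ?m f)"
  define M2 where "M2 = (\<Sum>f\<in>UNIV. ?m f ^ 2)"
  define G where "G = (\<Sum>f\<in>UNIV. (?m f - t) * (?m f - 2 * t))"
  have "q \<ge> 2" using card_field_ge_2 by (simp add: q_def)
  have m1: "M1 * q = q * t * Q"
    using arg_cong[OF sum_points_on[OF assms(1)], of real] assms(2)
    by (simp add: M1_def q_def Q_def of_nat_sum)
  have "real (card S + CARD('a) - 1) = q * t + q - 1"
    using card_field_ge_2[where 'a='a] assms(2) by (simp add: q_def of_nat_diff)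
  then have m2: "M2 * q^2 = q * t * (q * t + q - 1) * Q"
    using arg_cong[OF sum_points_on_squared[OF assms(1)], of real] assms(2)
    by (simp add: M2_def q_def Q_def of_nat_sum)
  have "G = (\<Sum>f\<in>UNIV. ?m f ^ 2 - 3 * t * ?m f + 2 * t^2)"
    unfolding G_def by (rule sum.cong) (simp_all add: algebra_simps power2_eq_square)
  also have "\<dots> = M2 - 3 * t * M1 + 2 * t^2 * Q"
    by (simp add: M1_def M2_def sum.distrib sum_subtractf sum_distrib_left q_def Q_def)
  finally have "G * q^2 = (M2 - 3 * t * M1 + 2 * t^2 * Q) * q^2"
    by simp
  also have "\<dots> = M2 * q^2 - 3 * t * q * (M1 * q) + 2 * t^2 * Q * q^2"
    by (simp add: algebra_simps power2_eq_square)
  also have "\<dots> = t * (q - 1) * Q * q"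
    unfolding m1 m2 by (simp add: algebra_simps power2_eq_square)
  finally have "G * q = t * (q - 1) * Q"
    using \<open>q \<ge> 2\<close> by (simp add: power2_eq_square)
  then show ?thesis by (simp add: G_def q_def Q_def)
qed

lemma card_zeros_le_sum_quadratic:
  fixes m :: "'b \<Rightarrow> nat" and t :: nat
  assumes "finite U" and "\<forall>x\<in>U. t dvd m x"
  shows "2 * real t ^ 2 * card {x\<in>U. m x = 0} \<le> (\<Sum>x\<in>U. (real (m x) - t) * (real (m x) - 2 * t))"
proof -
  have nonneg: "(real (m x) - t) * (real (m x) - 2 * t) \<ge> 0" if "x \<in> U" for x
  proof -
    from assms(2) that obtain k where "m x = t * k" by (auto elim: dvdE)
    then have "(real (m x) - t) * (real (m x) - 2 * t) = real t ^ 2 * ((real k - 1) * (real k - 2))"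
      by (simp add: algebra_simps power2_eq_square)
    moreover have "(real k - 1) * (real k - 2) \<ge> 0"
    proof (cases "k \<le> 1")
      case True
      then have "k = 0 \<or> k = 1" by auto
      then show ?thesis by auto
    next
      case False
      then show ?thesis by simp
    qed
    ultimately show ?thesis by simp
  qed
  have "2 * real t ^ 2 * card {x\<in>U. m x = 0}
        = (\<Sum>x\<in>{x\<in>U. m x = 0}. (real (m x) - t) * (real (m x) - 2 * t))"
    by (simp add: power2_eq_square)
  also have "\<dots> \<le> (\<Sum>x\<in>U. (real (m x) - t) * (real (m x) - 2 * t))"
    by (rule sum_mono2) (use assms(1) nonneg in auto)
  finally show ?thesis .
qed

lemma card_nonzero_functionals_with_kerf:
  fixes h :: "'a::{finite,field}^'n"
  assumes "h \<noteq> 0"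
  shows "card {f. f \<noteq> 0 \<and> kerf f = kerf h} = CARD('a) - 1"
proof -
  have "{f. f \<noteq> 0 \<and> kerf f = kerf h} = (\<lambda>c. c *s h) ` (UNIV - {0})"
  proof (intro set_eqI iffI)
    fix f assume f: "f \<in> {f. f \<noteq> 0 \<and> kerf f = kerf h}"
    then obtain c where "f = c *s h" using kerf_subset_imp_scale[OF assms, of f] by auto
    with f show "f \<in> (\<lambda>c. c *s h) ` (UNIV - {0})" by auto
  qed (use assms kerf_scale in auto)
  moreover have "inj_on (\<lambda>c. c *s h) (UNIV - {0})"
    using assms by (auto intro: inj_onI)
  ultimately show ?thesis by (simp add: card_image card_Diff_singleton)
qed

lemma card_hyperplanes_mult:
  fixes \<Phi> :: "('a::{finite,field}^'n) set \<Rightarrow> bool"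
  shows "card {H. pg_hyperplane H \<and> \<Phi> H} * (CARD('a) - 1)
           = card {f::'a^'n. f \<noteq> 0 \<and> \<Phi> (kerf f)}"
proof -
  let ?Hs = "{H. pg_hyperplane H \<and> \<Phi> H}" and ?F = "\<lambda>H. {f::'a^'n. f \<noteq> 0 \<and> kerf f = H}"
  have "{f. f \<noteq> 0 \<and> \<Phi> (kerf f)} = (\<Union>H\<in>?Hs. ?F H)"
    using pg_hyperplane_kerf by blast
  moreover have "card (\<Union>H\<in>?Hs. ?F H) = (\<Sum>H\<in>?Hs. card (?F H))"
    by (rule card_UN_disjoint) auto
  moreover have "card (?F H) = CARD('a) - 1" if "H \<in> ?Hs" for H
  proof -
    from that obtain h where "h \<noteq> 0" "H = kerf h"
      by (auto elim: pg_hyperplane_obtain_kerf)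
    then show ?thesis by (simp add: card_nonzero_functionals_with_kerf)
  qed
  ultimately show ?thesis by simp
qed

theorem mainTheorem3:
  fixes S :: "('a::{finite,field} ^ 'n) set set"
    and q r :: nat
  assumes "q = CARD('a)"
    and "r \<ge> 1"
    and "\<forall>P\<in>S. pg_point P"
    and "pg_spanning S"
    and "pg_divisible (q ^ r) S"
    and "card S = q ^ (r + 1)"
  shows "real (card {H. pg_hyperplane H \<and> (\<forall>P\<in>S. \<not> P \<subseteq> H)})
           \<le> (real q powi (int CARD('n) - int r - 1) - real q + 2) / 2"
proof -
  let ?Hs = "{H. pg_hyperplane H \<and> (\<forall>P\<in>S. \<not> P \<subseteq> H)}"
  define t :: real where "t = real q ^ r"
  define Q :: real where "Q = real q ^ CARD('n)"
  let ?g = "\<lambda>f. (real (points_on S f) - t) * (real (points_on S f) - 2 * t)"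
  have q: "real q \<ge> 2" using card_field_ge_2[where 'a='a] assms(1) by simp
  have t: "t > 0" using q by (simp add: t_def)
  have card_S: "real (card S) = real q * t" using assms(6) by (simp add: t_def)
  have "card ?Hs * (q - 1) = card {f\<in>UNIV - {0}. points_on S f = 0}"
    using card_hyperplanes_mult[of "\<lambda>H. \<forall>P\<in>S. \<not> P \<subseteq> H"] assms(1)
    by (simp add: points_on_def Ball_def)
  moreover have "\<forall>f\<in>UNIV - {0}. q ^ r dvd points_on S f"
    using assms(5,6) pg_hyperplane_kerf by (auto simp: pg_divisible_def points_on_def mod_eq_0_iff_dvd)
  ultimately have "2 * t^2 * (card ?Hs * (q - 1)) \<le> (\<Sum>f\<in>UNIV - {0}. ?g f)"
    using card_zeros_le_sum_quadratic[of "UNIV - {0}" "q ^ r" "points_on S"] by (simp add: t_def)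
  also have "\<dots> = (\<Sum>f\<in>UNIV. ?g f) - ?g 0"
    by (simp add: sum_diff1)
  also have "(\<Sum>f\<in>UNIV. ?g f) = t * (real q - 1) * Q / q"
    using sum_quadratic_points_on[OF assms(3), of t] card_S assms(1) q
    by (simp add: Q_def field_simps)
  also have "?g 0 = t^2 * (real q - 1) * (real q - 2)"
    using card_S by (simp add: points_on_zero algebra_simps power2_eq_square)
  also have "t * (real q - 1) * Q / q - t^2 * (real q - 1) * (real q - 2)
      = (Q / (q * t) - q + 2) * (t^2 * (real q - 1))"
    using q t by (simp add: field_simps power2_eq_square)
  finally have "2 * card ?Hs \<le> Q / (q * t) - q + 2"
    using q t by (simp add: of_nat_diff mult.commute)
  moreover have "real q powi (int CARD('n) - int r - 1) = Q / (q * t)"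
    using q by (simp add: power_int_diff t_def Q_def)
  ultimately show ?thesis by simp
qed

end
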